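(* Let $K\ge 2$, $T\ge 1$, $\delta\in(0,1/K]$, $c>0$, $\eta_0>0$, $c_\eta>0$. For $t=1,\dots,T$ let $\mathbf z_t\in\Delta^{K-1}$ and $\widetilde f_t\in\mathbb R$ with $|\widetilde f_t|\le c$, and set $\mathbf g_t:=-\widetilde f_t\mathbf z_t$ and $\ell_t(\mathbf w):=\mathbf g_t^\top\mathbf w=-\widetilde f_t\,\mathbf w^\top\mathbf z_t$. Let $\widehat{\mathbf w}_1=(1/K,\dots,1/K)$ and, for $t=1,\dots,T$, $$\widehat{\mathbf w}_{t+1}:=\arg\min_{\mathbf w\in\Delta^{K-1}}\Big\{\eta_t\,\mathbf g_t^\top\mathbf w+\mathrm{KL}(\mathbf w\,\|\,\widehat{\mathbf w}_t)\Big\},\qquad \eta_t:=\frac{\eta_0}{\sqrt{1+c_\eta t}}.$$ Let $\mathbf w_1,\dots,\mathbf w_T\in\Delta^{K-1}$ be a comparator sequence. Assume that all $\mathbf w_t$ ($t=1,\dots,T$) and all iterates $\widehat{\mathbf w}_t$ ($t=1,\dots,T+1$) lie in $\Delta^{K-1}_\delta$. Define $V_T:=\sum_{t=2}^T\|\mathbf w_t-\mathbf w_{t-1}\|_1$, $L_\delta:=1+\log(1/\delta)$ and the dynamic regret $R_T^{\mathrm{dyn}}:=\sum_{t=1}^T\ell_t(\widehat{\mathbf w}_t)-\sum_{t=1}^T\ell_t(\mathbf w_t)$. Then $$R_T^{\mathrm{dyn}}\le\sqrt{1+c_\eta T}\left(\frac{\log(1/\delta)+L_\delta V_T}{\eta_0}+\frac{c^2\eta_0}{c_\eta}\right).$$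 In particular, if $\eta_0=\sqrt{c_\eta(\log(1/\delta)+L_\delta V_T)}/c$, then $R_T^{\mathrm{dyn}}\le 2c\sqrt{\frac{\log(1/\delta)+L_\delta V_T}{c_\eta}}\sqrt{1+c_\eta T}$.
   Context: $\Delta^{K-1}:=\{\mathbf x\in\mathbb R^K_{\ge0}:\sum_k x_k=1\}$ is the probability simplex; $\Delta^{K-1}_\delta:=\{\mathbf w\in\Delta^{K-1}:w_k\ge\delta\ \forall k\}$ is the truncated simplex. $\mathrm{KL}(\mathbf u\|\mathbf w):=\sum_{k=1}^K u_k\log(u_k/w_k)$ (with $0\log 0=0$), which is the Bregman divergence of the negative entropy $d(\mathbf w)=\sum_k w_k\log w_k$. *)

theory Defs
  imports Complex_Main
begin

text \<open>Vectors in R^K are represented as functions nat => real, using only the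
coordinates 0..<K.\<close>

definition simplex :: "nat \<Rightarrow> (nat \<Rightarrow> real) set" where
  "simplex K = {x. (\<forall>k<K. x k \<ge> 0) \<and> (\<Sum>k<K. x k) = 1}"

definition trunc_simplex :: "nat \<Rightarrow> real \<Rightarrow> (nat \<Rightarrow> real) set" where
  "trunc_simplex K \<delta> = {w \<in> simplex K. \<forall>k<K. w k \<ge> \<delta>}"

definition KL :: "nat \<Rightarrow> (nat \<Rightarrow> real) \<Rightarrow> (nat \<Rightarrow> real) \<Rightarrow> real" where
  "KL K u w = (\<Sum>k<K. if u k = 0 then 0 else u k * ln (u k / w k))"

definition inner_K :: "nat \<Rightarrow> (nat \<Rightarrow> real) \<Rightarrow> (nat \<Rightarrow> real) \<Rightarrow> real" where
  "inner_K K x y = (\<Sum>k<K. x k * y k)"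

definition norm1_K :: "nat \<Rightarrow> (nat \<Rightarrow> real) \<Rightarrow> real" where
  "norm1_K K x = (\<Sum>k<K. \<bar>x k\<bar>)"

end

theory Submission
  imports Defs
begin

text \<open>
  The entropic mirror step is exponential weights, \<open>q\<^sub>t\<^sub>+\<^sub>1 \<propto> q\<^sub>t exp (-\<eta>\<^sub>t g\<^sub>t)\<close>, so
  \<open>KL(u \<parallel> q\<^sub>t\<^sub>+\<^sub>1) - KL(u \<parallel> q\<^sub>t)\<close> is \<open>\<eta>\<^sub>t \<langle>g\<^sub>t, u\<rangle>\<close> plus the log-partition function. Since the
  coordinates of \<open>g\<^sub>t\<close> differ by at most \<open>c\<close>, a Hoeffding-type bound on the latter gives
  \<open>\<langle>g\<^sub>t, q\<^sub>t - u\<rangle> \<le> (KL(u \<parallel> q\<^sub>t) - KL(u \<parallel> q\<^sub>t\<^sub>+\<^sub>1)) / \<eta>\<^sub>t + \<eta>\<^sub>t c\<^sup>2 / 2\<close>.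
  Summing with the moving comparator \<open>u = w\<^sub>t\<close>, consecutive KL terms differ by a change of the
  first argument, which on the truncated simplex is Lipschitz for the \<open>\<ell>\<^sub>1\<close>-norm with constant
  \<open>L\<^sub>\<delta>\<close>, while KL itself is at most \<open>log (1/\<delta>)\<close> there; as \<open>1/\<eta>\<^sub>t\<close> is nondecreasing, Abel
  summation bounds the KL part by \<open>(log (1/\<delta>) + L\<^sub>\<delta> V\<^sub>T) / \<eta>\<^sub>T\<close>. Finally
  \<open>\<Sum> \<eta>\<^sub>t \<le> 2 \<eta>\<^sub>0 \<surd>(1 + c\<^sub>\<eta> T) / c\<^sub>\<eta>\<close> by comparison with an integral.
\<close>

lemma sinh_le_mult_cosh:
  fixes x :: real
  assumes "0 \<le> x"
  shows "sinh x \<le> x * cosh x"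
proof -
  have "(\<lambda>y. y * cosh y - sinh y) 0 \<le> (\<lambda>y. y * cosh y - sinh y) x"
  proof (rule DERIV_nonneg_imp_nondecreasing[OF assms])
    fix y :: real
    assume "0 \<le> y" "y \<le> x"
    moreover have "((\<lambda>y. y * cosh y - sinh y) has_real_derivative y * sinh y) (at y)"
      by (auto intro!: derivative_eq_intros)
    ultimately show "\<exists>d. ((\<lambda>y. y * cosh y - sinh y) has_real_derivative d) (at y) \<and> 0 \<le> d"
      by auto
  qed
  then show ?thesis
    by simp
qed

lemma cosh_le_exp_square_half:
  fixes x :: real
  assumes "0 \<le> x"
  shows "cosh x \<le> exp (x\<^sup>2 / 2)"
proof -
  have "(\<lambda>y. y\<^sup>2 / 2 - ln (cosh y)) 0 \<le> (\<lambda>y. y\<^sup>2 / 2 - ln (cosh y)) x"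
  proof (rule DERIV_nonneg_imp_nondecreasing[OF assms])
    fix y :: real
    assume "0 \<le> y" "y \<le> x"
    then have "sinh y / cosh y \<le> y"
      using sinh_le_mult_cosh by (simp add: divide_le_eq)
    moreover have "((\<lambda>y. y\<^sup>2 / 2 - ln (cosh y)) has_real_derivative y - sinh y / cosh y) (at y)"
      by (auto intro!: derivative_eq_intros simp: power2_eq_square)
    ultimately show "\<exists>d. ((\<lambda>y. y\<^sup>2 / 2 - ln (cosh y)) has_real_derivative d) (at y) \<and> 0 \<le> d"
      by (intro exI conjI) auto
  qed
  then have "ln (cosh x) \<le> x\<^sup>2 / 2"
    by simp
  then show ?thesis
    by (metis cosh_real_pos exp_le_cancel_iff exp_ln)
qed

text \<open>The chord of the convex function \<open>exp\<close> over \<open>[-b, b]\<close>; it lies above \<open>exp x\<close> because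
  both chord endpoints lie above the tangent at \<open>x\<close>.\<close>

lemma exp_le_cosh_plus_sinh:
  fixes x b :: real
  assumes "\<bar>x\<bar> \<le> b"
  shows "exp x \<le> cosh b + x / b * sinh b"
proof (cases "b = 0")
  case False
  then have b: "0 < b"
    using assms by linarith
  have tangent: "exp x * (1 + y - x) \<le> exp y" for y
  proof -
    have "1 + y - x \<le> exp (y - x)"
      using exp_ge_add_one_self[of "y - x"] by linarith
    then have "exp x * (1 + y - x) \<le> exp x * exp (y - x)"
      by simp
    then show ?thesis
      by (simp add: exp_diff)
  qed
  have "exp x * (2 * b) = (b - x) * (exp x * (1 + (- b) - x)) + (b + x) * (exp x * (1 + b - x))"
    by (simp add: algebra_simps)
  also have "\<dots> \<le> (b - x) * exp (-b) + (b + x) * exp b"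
    using assms by (intro add_mono mult_left_mono tangent) auto
  finally have "exp x * (2 * b) \<le> (b - x) * exp (-b) + (b + x) * exp b" .
  then show ?thesis
    using b by (simp add: cosh_def sinh_def field_simps)
qed (use assms in simp)

lemma sum_mult_exp_le_Hoeffding:
  fixes q Y :: "'a \<Rightarrow> real"
  assumes q_nonneg: "\<And>x. x \<in> A \<Longrightarrow> 0 \<le> q x" and q_sum: "(\<Sum>x\<in>A. q x) = 1"
    and Y_osc: "\<And>x y. x \<in> A \<Longrightarrow> y \<in> A \<Longrightarrow> \<bar>Y x - Y y\<bar> \<le> b"
  shows "(\<Sum>x\<in>A. q x * exp (Y x)) \<le> exp ((\<Sum>x\<in>A. q x * Y x) + b\<^sup>2 / 2)"
proof -
  define m where "m = (\<Sum>x\<in>A. q x * Y x)"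
  have dev: "\<bar>Y x - m\<bar> \<le> b" if x: "x \<in> A" for x
  proof -
    have "Y x - m = (\<Sum>y\<in>A. q y * (Y x - Y y))"
      using q_sum by (simp add: m_def right_diff_distrib sum_subtractf flip: sum_distrib_right)
    also have "\<bar>\<dots>\<bar> \<le> (\<Sum>y\<in>A. q y * b)"
      using q_nonneg Y_osc[OF x]
      by (intro order_trans[OF sum_abs] sum_mono) (simp add: abs_mult mult_left_mono)
    finally show ?thesis
      using q_sum by (simp flip: sum_distrib_right)
  qed
  moreover obtain x where "x \<in> A"
    using q_sum by fastforce
  ultimately have "0 \<le> b"
    by fastforce
  have centered: "(\<Sum>x\<in>A. q x * (Y x - m)) = 0"
    using q_sum by (simp add: m_def right_diff_distrib sum_subtractf flip: sum_distrib_right)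
  have "(\<Sum>x\<in>A. q x * exp (Y x - m)) \<le> (\<Sum>x\<in>A. q x * (cosh b + (Y x - m) / b * sinh b))"
    using q_nonneg dev by (intro sum_mono mult_left_mono exp_le_cosh_plus_sinh) auto
  also have "\<dots> = (\<Sum>x\<in>A. cosh b * q x + sinh b / b * (q x * (Y x - m)))"
    by (intro sum.cong) (simp_all add: field_simps)
  also have "\<dots> = cosh b * (\<Sum>x\<in>A. q x) + sinh b / b * (\<Sum>x\<in>A. q x * (Y x - m))"
    by (simp only: sum.distrib sum_distrib_left)
  also have "\<dots> = cosh b"
    using q_sum centered by simp
  also have "\<dots> \<le> exp (b\<^sup>2 / 2)"
    using \<open>0 \<le> b\<close> by (rule cosh_le_exp_square_half)
  finally have "exp m * (\<Sum>x\<in>A. q x * exp (Y x - m)) \<le> exp m * exp (b\<^sup>2 / 2)"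
    by simp
  moreover have "exp m * (\<Sum>x\<in>A. q x * exp (Y x - m)) = (\<Sum>x\<in>A. q x * exp (Y x))"
    by (simp add: sum_distrib_left exp_diff)
  ultimately show ?thesis
    unfolding m_def[symmetric] by (simp add: exp_add)
qed

lemma simplex_le_one: "x \<in> simplex K \<Longrightarrow> k < K \<Longrightarrow> x k \<le> 1"
  unfolding simplex_def using member_le_sum[of k "{..<K}" x] by auto

lemma simplex_abs_diff_le_one:
  assumes "x \<in> simplex K" "j < K" "k < K"
  shows "\<bar>x j - x k\<bar> \<le> 1"
proof -
  have "0 \<le> x j" "x j \<le> 1" "0 \<le> x k" "x k \<le> 1"
    using assms simplex_le_one[OF assms(1)] by (auto simp: simplex_def)
  then show ?thesis
    by linarith
qed

lemma abs_diff_scaled_simplex_le: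
  assumes "x \<in> simplex K" "\<bar>f\<bar> \<le> c" "j < K" "k < K"
  shows "\<bar>f * x j - f * x k\<bar> \<le> c"
proof -
  have "\<bar>f\<bar> * \<bar>x j - x k\<bar> \<le> c * 1"
    using assms simplex_abs_diff_le_one[OF assms(1,3,4)] by (intro mult_mono) auto
  then show ?thesis
    by (simp add: abs_mult flip: right_diff_distrib)
qed

lemma simplex_dim_pos: "x \<in> simplex K \<Longrightarrow> 0 < K"
  by (cases K) (auto simp: simplex_def)

lemma trunc_simplexD:
  assumes "w \<in> trunc_simplex K \<delta>"
  shows "w \<in> simplex K" and "k < K \<Longrightarrow> \<delta> \<le> w k"
  using assms by (auto simp: trunc_simplex_def)

lemma trunc_simplex_pos: "w \<in> trunc_simplex K \<delta> \<Longrightarrow> 0 < \<delta> \<Longrightarrow> k < K \<Longrightarrow> 0 < w k"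
  using trunc_simplexD(2) less_le_trans by blast

lemma trunc_simplex_le_one:
  assumes "w \<in> trunc_simplex K \<delta>"
  shows "\<delta> \<le> 1"
proof -
  have "0 < K"
    using simplex_dim_pos trunc_simplexD(1)[OF assms] .
  then show ?thesis
    using trunc_simplexD[OF assms] simplex_le_one by (meson order_trans)
qed

text \<open>The convention \<open>0 log 0 = 0\<close> built into \<^const>\<open>KL\<close> is automatic here, since \<open>0 * ln _ = 0\<close>.\<close>

lemma KL_eq_sum: "KL K u w = (\<Sum>k<K. u k * ln (u k / w k))"
  unfolding KL_def by (intro sum.cong) auto

lemma KL_self: "KL K u u = 0"
  unfolding KL_def by (intro sum.neutral) auto

lemma diff_less_mult_ln_div:
  fixes u w :: real
  assumes "0 \<le> u" "0 < w" "u \<noteq> w"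
  shows "u - w < u * ln (u / w)"
proof (cases "u = 0")
  case False
  then have "w / u \<noteq> 1" "0 < w / u"
    using assms by auto
  then have "ln (w / u) < w / u - 1"
    using ln_le_minus_one ln_eq_minus_one by (metis order_le_less)
  then have "u * ln (w / u) < w - u"
    using assms False by (simp add: field_simps)
  moreover have "ln (u / w) = - ln (w / u)"
    using assms False by (simp add: ln_div)
  ultimately show ?thesis
    by simp
qed (use assms in simp)

lemma diff_le_mult_ln_div:
  fixes u w :: real
  assumes "0 \<le> u" "0 < w"
  shows "u - w \<le> u * ln (u / w)"
  using diff_less_mult_ln_div[OF assms] assms by (cases "u = w") auto

lemma KL_nonneg:
  assumes "u \<in> simplex K" "w \<in> simplex K" "\<And>k. k < K \<Longrightarrow> 0 < w k"
  shows "0 \<le> KL K u w"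
proof -
  have "0 = (\<Sum>k<K. u k - w k)"
    using assms by (simp add: simplex_def sum_subtractf)
  also have "\<dots> \<le> KL K u w"
    unfolding KL_eq_sum using assms by (intro sum_mono diff_le_mult_ln_div) (auto simp: simplex_def)
  finally show ?thesis .
qed

lemma KL_nonpos_imp_eq:
  assumes u: "u \<in> simplex K" and w: "w \<in> simplex K" "\<And>k. k < K \<Longrightarrow> 0 < w k"
    and KL: "KL K u w \<le> 0" and k: "k < K"
  shows "u k = w k"
proof (rule ccontr)
  assume "u k \<noteq> w k"
  have "0 = (\<Sum>k<K. u k - w k)"
    using u w by (simp add: simplex_def sum_subtractf)
  also have "\<dots> < KL K u w"
    unfolding KL_eq_sum
  proof (rule sum_strict_mono_ex1)
    show "\<forall>j\<in>{..<K}. u j - w j \<le> u j * ln (u j / w j)"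
      using u w by (auto simp: simplex_def intro: diff_le_mult_ln_div)
    show "\<exists>j\<in>{..<K}. u j - w j < u j * ln (u j / w j)"
      using u w k \<open>u k \<noteq> w k\<close> by (auto simp: simplex_def intro!: bexI[of _ k] diff_less_mult_ln_div)
  qed simp
  finally show False
    using KL by simp
qed

lemma KL_le_ln_inverse:
  assumes u: "u \<in> simplex K" and w: "w \<in> trunc_simplex K \<delta>" and \<delta>: "0 < \<delta>"
  shows "KL K u w \<le> ln (1 / \<delta>)"
proof -
  have "KL K u w \<le> (\<Sum>k<K. u k * ln (1 / \<delta>))"
    unfolding KL_eq_sum
  proof (rule sum_mono)
    fix k assume "k \<in> {..<K}"
    then have uk: "0 \<le> u k" "u k \<le> 1" and wk: "\<delta> \<le> w k"
      using u simplex_le_one[OF u] trunc_simplexD(2)[OF w] by (auto simp: simplex_def)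
    have "u k * \<delta> \<le> w k"
      using mult_left_le_one_le[of \<delta> "u k"] uk wk \<delta> by linarith
    then have "u k / w k \<le> 1 / \<delta>"
      using wk \<delta> by (simp add: divide_simps)
    then show "u k * ln (u k / w k) \<le> u k * ln (1 / \<delta>)"
      using uk wk \<delta> by (cases "u k = 0") (auto intro!: mult_left_mono)
  qed
  also have "\<dots> = ln (1 / \<delta>)"
    using u by (simp add: simplex_def flip: sum_distrib_right)
  finally show ?thesis .
qed

lemma abs_ln_div_le_ln_inverse:
  fixes x w \<delta> :: real
  assumes "0 < \<delta>" "\<delta> \<le> x" "x \<le> 1" "\<delta> \<le> w" "w \<le> 1"
  shows "\<bar>ln (x / w)\<bar> \<le> ln (1 / \<delta>)"
proof -
  have "\<delta> * w \<le> x" "x * \<delta> \<le> w"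
    using mult_left_le[of w \<delta>] mult_left_le_one_le[of \<delta> x] assms by linarith+
  then have "\<delta> \<le> x / w" "x / w \<le> 1 / \<delta>"
    using assms by (simp_all add: divide_simps)
  then have "ln \<delta> \<le> ln (x / w)" "ln (x / w) \<le> ln (1 / \<delta>)"
    using assms by (simp_all add: ln_mono)
  then show ?thesis
    using assms by (simp add: abs_le_iff ln_div)
qed

text \<open>The tangent of the convex map \<open>t \<mapsto> t ln (t/w)\<close> at \<open>t = x\<close> has slope \<open>1 + ln (x/w)\<close>.\<close>

lemma KL_diff_le_norm1:
  assumes x: "x \<in> trunc_simplex K \<delta>" and w: "w \<in> trunc_simplex K \<delta>" and y: "y \<in> simplex K"
    and \<delta>: "0 < \<delta>"
  shows "KL K x w - KL K y w \<le> (1 + ln (1 / \<delta>)) * norm1_K K (\<lambda>k. x k - y k)"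
proof -
  have pointwise: "x k * ln (x k / w k) - y k * ln (y k / w k) \<le> (1 + ln (1 / \<delta>)) * \<bar>x k - y k\<bar>"
    if k: "k < K" for k
  proof -
    have xk: "\<delta> \<le> x k" "x k \<le> 1" and wk: "\<delta> \<le> w k" "w k \<le> 1" and yk: "0 \<le> y k"
      using k y trunc_simplexD[OF x] trunc_simplexD[OF w] simplex_le_one[OF trunc_simplexD(1)[OF x]]
        simplex_le_one[OF trunc_simplexD(1)[OF w]] by (auto simp: simplex_def)
    have "y k * ln (y k / x k) = y k * ln (y k / w k) - y k * ln (x k / w k)"
      using xk wk \<delta> by (cases "y k = 0") (auto simp: ln_div algebra_simps)
    then have "x k * ln (x k / w k) - y k * ln (y k / w k) \<le> (1 + ln (x k / w k)) * (x k - y k)"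
      using diff_le_mult_ln_div[of "y k" "x k"] yk xk \<delta> by (simp add: algebra_simps)
    also have "\<dots> \<le> \<bar>1 + ln (x k / w k)\<bar> * \<bar>x k - y k\<bar>"
      by (metis abs_ge_self abs_mult)
    also have "\<dots> \<le> (1 + ln (1 / \<delta>)) * \<bar>x k - y k\<bar>"
      using abs_ln_div_le_ln_inverse[OF \<delta> xk wk] by (intro mult_right_mono) auto
    finally show ?thesis .
  qed
  then show ?thesis
    unfolding KL_eq_sum norm1_K_def sum_distrib_left by (auto simp flip: sum_subtractf intro!: sum_mono pointwise)
qed

definition exp_weights :: "nat \<Rightarrow> real \<Rightarrow> (nat \<Rightarrow> real) \<Rightarrow> (nat \<Rightarrow> real) \<Rightarrow> nat \<Rightarrow> real" where
  "exp_weights K \<eta> g q = (\<lambda>k. q k * exp (- \<eta> * g k) / (\<Sum>j<K. q j * exp (- \<eta> * g j)))"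

lemma exp_weights_partition_pos:
  assumes "q \<in> simplex K" "\<And>k. k < K \<Longrightarrow> 0 < q k"
  shows "0 < (\<Sum>j<K. q j * exp (- \<eta> * g j))"
proof -
  have "0 < K"
    using simplex_dim_pos assms(1) .
  then show ?thesis
    using assms by (intro sum_pos) auto
qed

lemma exp_weights_pos:
  assumes "q \<in> simplex K" "\<And>k. k < K \<Longrightarrow> 0 < q k" "k < K"
  shows "0 < exp_weights K \<eta> g q k"
  using assms exp_weights_partition_pos[OF assms(1,2)] by (simp add: exp_weights_def)

lemma exp_weights_in_simplex:
  assumes "q \<in> simplex K" "\<And>k. k < K \<Longrightarrow> 0 < q k"
  shows "exp_weights K \<eta> g q \<in> simplex K"
  using exp_weights_pos[OF assms] exp_weights_partition_pos[OF assms, of \<eta> g]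
  by (auto simp: simplex_def exp_weights_def less_imp_le simp flip: sum_divide_distrib)

lemma KL_exp_weights:
  assumes v: "v \<in> simplex K" and q: "q \<in> simplex K" "\<And>k. k < K \<Longrightarrow> 0 < q k"
  shows "KL K v (exp_weights K \<eta> g q) = KL K v q + \<eta> * inner_K K g v + ln (\<Sum>j<K. q j * exp (- \<eta> * g j))"
proof -
  define Z where "Z = (\<Sum>j<K. q j * exp (- \<eta> * g j))"
  have Z: "0 < Z"
    unfolding Z_def using exp_weights_partition_pos[OF q] .
  have "v k * ln (v k / exp_weights K \<eta> g q k) = v k * ln (v k / q k) + \<eta> * (g k * v k) + ln Z * v k"
    if "k < K" for k
  proof -
    have "exp_weights K \<eta> g q k = q k * exp (- \<eta> * g k) / Z"
      by (simp add: exp_weights_def Z_def)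
    then show ?thesis
      using q(2)[OF that] Z by (cases "v k = 0") (auto simp: ln_div ln_mult algebra_simps)
  qed
  then have "KL K v (exp_weights K \<eta> g q) = KL K v q + \<eta> * inner_K K g v + ln Z * (\<Sum>k<K. v k)"
    by (simp add: KL_eq_sum inner_K_def sum.distrib sum_distrib_left)
  then show ?thesis
    using v by (simp add: simplex_def Z_def)
qed

lemma entropic_mirror_step_eq_exp_weights:
  assumes q: "q \<in> simplex K" "\<And>k. k < K \<Longrightarrow> 0 < q k" and q': "q' \<in> simplex K"
    and argmin: "\<forall>v\<in>simplex K. \<eta> * inner_K K g q' + KL K q' q \<le> \<eta> * inner_K K g v + KL K v q"
    and k: "k < K"
  shows "q' k = exp_weights K \<eta> g q k"
proof (rule KL_nonpos_imp_eq[OF q'])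
  let ?p = "exp_weights K \<eta> g q"
  show p: "?p \<in> simplex K" "\<And>k. k < K \<Longrightarrow> 0 < ?p k"
    using exp_weights_in_simplex[OF q] exp_weights_pos[OF q] by auto
  have "KL K q' ?p - KL K ?p ?p = (\<eta> * inner_K K g q' + KL K q' q) - (\<eta> * inner_K K g ?p + KL K ?p q)"
    using KL_exp_weights[OF q' q] KL_exp_weights[OF p(1) q] by simp
  then show "KL K q' ?p \<le> 0"
    using argmin p(1) by (simp add: KL_self)
qed (fact k)

lemma entropic_mirror_step_regret:
  assumes q: "q \<in> simplex K" "\<And>k. k < K \<Longrightarrow> 0 < q k" and q': "q' \<in> simplex K"
    and argmin: "\<forall>v\<in>simplex K. \<eta> * inner_K K g q' + KL K q' q \<le> \<eta> * inner_K K g v + KL K v q"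
    and u: "u \<in> simplex K" and \<eta>: "0 < \<eta>" and g: "\<And>j k. j < K \<Longrightarrow> k < K \<Longrightarrow> \<bar>g j - g k\<bar> \<le> G"
  shows "inner_K K g q - inner_K K g u \<le> (KL K u q - KL K u q') / \<eta> + \<eta> * G\<^sup>2 / 2"
proof -
  define Z where "Z = (\<Sum>j<K. q j * exp (- \<eta> * g j))"
  have "KL K u q' = KL K u (exp_weights K \<eta> g q)"
    unfolding KL_eq_sum using entropic_mirror_step_eq_exp_weights[OF q q' argmin] by simp
  then have KL_q': "KL K u q' = KL K u q + \<eta> * inner_K K g u + ln Z"
    using KL_exp_weights[OF u q] by (simp add: Z_def)
  have "\<bar>- \<eta> * g j - - \<eta> * g k\<bar> \<le> \<eta> * G" if "j < K" "k < K" for j k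
    using g[OF that] \<eta> by (simp add: abs_mult flip: right_diff_distrib)
  then have "Z \<le> exp ((\<Sum>j<K. q j * (- \<eta> * g j)) + (\<eta> * G)\<^sup>2 / 2)"
    unfolding Z_def using q by (intro sum_mult_exp_le_Hoeffding) (auto simp: simplex_def)
  also have "\<dots> = exp (- \<eta> * inner_K K g q + \<eta>\<^sup>2 * G\<^sup>2 / 2)"
    by (simp add: inner_K_def sum_distrib_left power_mult_distrib algebra_simps)
  finally have "ln Z \<le> - \<eta> * inner_K K g q + \<eta>\<^sup>2 * G\<^sup>2 / 2"
    using exp_weights_partition_pos[OF q] ln_mono by (fastforce simp: Z_def)
  then show ?thesis
    using KL_q' \<eta> by (simp add: field_simps power2_eq_square)
qed

text \<open>Abel summation: the weights \<open>e\<close> are nondecreasing, so the telescoping remainders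
  \<open>B (t - 1) * (e t - e (t - 1))\<close> add up to at most \<open>D * e T\<close>.\<close>

lemma sum_weighted_telescope_le:
  fixes A B r e :: "nat \<Rightarrow> real"
  assumes T: "1 \<le> T" and A1: "A 1 \<le> D"
    and B: "\<And>t. t \<in> {1..T} \<Longrightarrow> 0 \<le> B t \<and> B t \<le> D"
    and A: "\<And>t. t \<in> {2..T} \<Longrightarrow> A t \<le> B (t - 1) + r t"
    and r: "\<And>t. t \<in> {2..T} \<Longrightarrow> 0 \<le> r t"
    and e: "mono_on {1..T} e" "0 \<le> e 1"
  shows "(\<Sum>t=1..T. (A t - B t) * e t) \<le> e T * (D + (\<Sum>t=2..T. r t))"
proof -
  have partial: "(\<Sum>t=1..n. (A t - B t) * e t) + B n * e n \<le> e n * (D + (\<Sum>t=2..n. r t))"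
    if "1 \<le> n" "n \<le> T" for n
    using that
  proof (induction n rule: dec_induct)
    case base
    then show ?case
      using A1 e(2) by (simp add: algebra_simps mult_right_mono)
  next
    case (step n)
    define S where "S = (\<Sum>t=2..n. r t)"
    have n: "n \<in> {1..T}" "Suc n \<in> {1..T}" "Suc n \<in> {2..T}"
      using step by auto
    have e_mono: "e n \<le> e (Suc n)" and "e 1 \<le> e (Suc n)"
      using n by (auto intro: mono_onD[OF e(1)])
    then have e_nonneg: "0 \<le> e (Suc n)"
      using e(2) by linarith
    have "0 \<le> S"
      unfolding S_def using r step by (intro sum_nonneg) auto
    have A_Suc: "A (Suc n) \<le> B n + r (Suc n)"
      using A[OF n(3)] by simp
    have IH: "(\<Sum>t=1..n. (A t - B t) * e t) + B n * e n \<le> e n * (D + S)"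
      using step by (simp add: S_def)
    have S_Suc: "(\<Sum>t=2..Suc n. r t) = S + r (Suc n)"
      using step by (simp add: S_def)
    have "(\<Sum>t=1..Suc n. (A t - B t) * e t) + B (Suc n) * e (Suc n)
        = (\<Sum>t=1..n. (A t - B t) * e t) + B n * e n - B n * e n + A (Suc n) * e (Suc n)"
      by (simp add: algebra_simps)
    also have "\<dots> \<le> e n * (D + S) - B n * e n + (B n + r (Suc n)) * e (Suc n)"
      using IH mult_right_mono[OF A_Suc e_nonneg] by linarith
    also have "\<dots> = e n * S + D * e n + B n * (e (Suc n) - e n) + r (Suc n) * e (Suc n)"
      by (simp add: algebra_simps)
    also have "\<dots> \<le> e (Suc n) * S + D * e n + D * (e (Suc n) - e n) + r (Suc n) * e (Suc n)"
      using mult_right_mono[OF e_mono \<open>0 \<le> S\<close>] mult_right_mono[of "B n" D "e (Suc n) - e n"]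
        B[OF n(1)] e_mono by auto
    also have "\<dots> = e (Suc n) * (D + (\<Sum>t=2..Suc n. r t))"
      unfolding S_Suc by (simp add: algebra_simps)
    finally show ?case .
  qed
  moreover have "0 \<le> B T * e T"
    using B[of T] T mono_onD[OF e(1), of 1 T] e(2) by simp
  ultimately show ?thesis
    using partial[OF T order_refl] by linarith
qed

lemma antimono_sqrt_step_sizes:
  fixes a \<eta>0 :: real
  assumes "0 \<le> a" "0 \<le> \<eta>0"
  shows "antimono_on S (\<lambda>t. \<eta>0 / sqrt (1 + a * real t))"
  using assms by (auto intro!: monotone_onI divide_left_mono mult_pos_pos add_pos_nonneg mult_left_mono)

lemma sum_sqrt_step_sizes_le:
  fixes a \<eta>0 :: real
  assumes a: "0 < a" and \<eta>0: "0 \<le> \<eta>0"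
  shows "(\<Sum>t=1..T. \<eta>0 / sqrt (1 + a * real t)) \<le> 2 * \<eta>0 / a * sqrt (1 + a * real T)"
proof -
  have "(\<Sum>t=1..T. 1 / sqrt (1 + a * real t)) \<le> 2 / a * sqrt (1 + a * real T) - 2 / a"
  proof (induction T)
    case (Suc T)
    define x where "x = sqrt (1 + a * real T)"
    define y where "y = sqrt (1 + a * real (Suc T))"
    have x: "1 \<le> x" "x \<le> y"
      using a by (simp_all add: x_def y_def)
    have "a = (y - x) * (y + x)"
      using a by (simp add: x_def y_def algebra_simps flip: power2_eq_square)
    also have "\<dots> \<le> (y - x) * (2 * y)"
      using x by (intro mult_left_mono) auto
    finally have "1 / y \<le> 2 / a * (y - x)"
      using a x by (simp add: field_simps)
    then show ?case
      using Suc by (simp add: x_def y_def algebra_simps)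
  qed simp
  also have "\<dots> \<le> 2 / a * sqrt (1 + a * real T)"
    using a by simp
  finally have "\<eta>0 * (\<Sum>t=1..T. 1 / sqrt (1 + a * real t)) \<le> \<eta>0 * (2 / a * sqrt (1 + a * real T))"
    using \<eta>0 by (rule mult_left_mono)
  then show ?thesis
    by (simp add: sum_distrib_left mult_ac)
qed

lemma sum_KL_moving_comparator_le:
  fixes what w :: "nat \<Rightarrow> nat \<Rightarrow> real" and e :: "nat \<Rightarrow> real"
  assumes T: "1 \<le> T" and \<delta>: "0 < \<delta>"
    and what: "\<And>t. t \<in> {1..Suc T} \<Longrightarrow> what t \<in> trunc_simplex K \<delta>"
    and w: "\<And>t. t \<in> {1..T} \<Longrightarrow> w t \<in> trunc_simplex K \<delta>"
    and e: "mono_on {1..T} e" "0 \<le> e 1"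
  shows "(\<Sum>t=1..T. (KL K (w t) (what t) - KL K (w t) (what (Suc t))) * e t)
     \<le> e T * (ln (1 / \<delta>) + (1 + ln (1 / \<delta>)) * (\<Sum>t=2..T. norm1_K K (\<lambda>k. w t k - w (t - 1) k)))"
proof -
  define r where "r t = (1 + ln (1 / \<delta>)) * norm1_K K (\<lambda>k. w t k - w (t - 1) k)" for t
  have pos: "\<And>x k. x \<in> trunc_simplex K \<delta> \<Longrightarrow> k < K \<Longrightarrow> 0 < x k"
    using trunc_simplex_pos \<delta> by blast
  have "0 \<le> ln (1 / \<delta>)"
    using trunc_simplex_le_one[OF w[of T]] T \<delta> by simp
  have "(\<Sum>t=1..T. (KL K (w t) (what t) - KL K (w t) (what (Suc t))) * e t)
      \<le> e T * (ln (1 / \<delta>) + (\<Sum>t=2..T. r t))"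
  proof (rule sum_weighted_telescope_le[OF T _ _ _ _ e])
    show "KL K (w 1) (what 1) \<le> ln (1 / \<delta>)"
      using KL_le_ln_inverse trunc_simplexD(1)[OF w] what \<delta> T by simp
    show "0 \<le> KL K (w t) (what (Suc t)) \<and> KL K (w t) (what (Suc t)) \<le> ln (1 / \<delta>)"
      if "t \<in> {1..T}" for t
    proof -
      have "w t \<in> trunc_simplex K \<delta>" "what (Suc t) \<in> trunc_simplex K \<delta>"
        using that w what by auto
      then show ?thesis
        using KL_nonneg KL_le_ln_inverse trunc_simplexD(1) \<delta> pos by meson
    qed
    show "KL K (w t) (what t) \<le> KL K (w (t - 1)) (what (Suc (t - 1))) + r t" if "t \<in> {2..T}" for t
    proof -
      have t: "t \<in> {1..T}" "t \<in> {1..Suc T}" "t - 1 \<in> {1..T}" "Suc (t - 1) = t"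
        using that by auto
      show ?thesis
        using KL_diff_le_norm1[OF w[OF t(1)] what[OF t(2)] trunc_simplexD(1)[OF w[OF t(3)]] \<delta>] t(4)
        by (simp add: r_def)
    qed
    show "0 \<le> r t" for t
      unfolding r_def norm1_K_def using \<open>0 \<le> ln (1 / \<delta>)\<close> by (simp add: sum_nonneg)
  qed
  then show ?thesis
    by (simp add: r_def sum_distrib_left)
qed

lemma entropic_mirror_descent_dynamic_regret:
  fixes what w g :: "nat \<Rightarrow> nat \<Rightarrow> real" and \<eta> :: "nat \<Rightarrow> real"
  assumes T: "1 \<le> T" and \<delta>: "0 < \<delta>"
    and what: "\<And>t. t \<in> {1..Suc T} \<Longrightarrow> what t \<in> trunc_simplex K \<delta>"
    and w: "\<And>t. t \<in> {1..T} \<Longrightarrow> w t \<in> trunc_simplex K \<delta>"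
    and argmin: "\<And>t. t \<in> {1..T} \<Longrightarrow> \<forall>v\<in>simplex K.
       \<eta> t * inner_K K (g t) (what (Suc t)) + KL K (what (Suc t)) (what t) \<le> \<eta> t * inner_K K (g t) v + KL K v (what t)"
    and \<eta>: "\<And>t. t \<in> {1..T} \<Longrightarrow> 0 < \<eta> t" "antimono_on {1..T} \<eta>"
    and g: "\<And>t j k. t \<in> {1..T} \<Longrightarrow> j < K \<Longrightarrow> k < K \<Longrightarrow> \<bar>g t j - g t k\<bar> \<le> G"
  shows "(\<Sum>t=1..T. inner_K K (g t) (what t) - inner_K K (g t) (w t))
     \<le> (ln (1 / \<delta>) + (1 + ln (1 / \<delta>)) * (\<Sum>t=2..T. norm1_K K (\<lambda>k. w t k - w (t - 1) k))) / \<eta> T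
        + G\<^sup>2 / 2 * (\<Sum>t=1..T. \<eta> t)"
proof -
  define D where "D t = KL K (w t) (what t) - KL K (w t) (what (Suc t))" for t
  have "(\<Sum>t=1..T. inner_K K (g t) (what t) - inner_K K (g t) (w t))
      \<le> (\<Sum>t=1..T. D t * (1 / \<eta> t) + G\<^sup>2 / 2 * \<eta> t)"
  proof (rule sum_mono)
    fix t
    assume t: "t \<in> {1..T}"
    have iterates: "what t \<in> trunc_simplex K \<delta>" "what (Suc t) \<in> trunc_simplex K \<delta>"
      using what t by auto
    show "inner_K K (g t) (what t) - inner_K K (g t) (w t) \<le> D t * (1 / \<eta> t) + G\<^sup>2 / 2 * \<eta> t"
      using entropic_mirror_step_regret[OF trunc_simplexD(1)[OF iterates(1)]
          trunc_simplex_pos[OF iterates(1) \<delta>] trunc_simplexD(1)[OF iterates(2)] argmin[OF t]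
          trunc_simplexD(1)[OF w[OF t]] \<eta>(1)[OF t] g[OF t]]
      by (simp add: D_def mult.commute)
  qed
  also have "\<dots> = (\<Sum>t=1..T. D t * (1 / \<eta> t)) + G\<^sup>2 / 2 * (\<Sum>t=1..T. \<eta> t)"
    by (simp only: sum.distrib sum_distrib_left)
  also have "(\<Sum>t=1..T. D t * (1 / \<eta> t))
      \<le> 1 / \<eta> T * (ln (1 / \<delta>) + (1 + ln (1 / \<delta>)) * (\<Sum>t=2..T. norm1_K K (\<lambda>k. w t k - w (t - 1) k)))"
    unfolding D_def
  proof (rule sum_KL_moving_comparator_le[OF T \<delta> what w])
    show "mono_on {1..T} (\<lambda>t. 1 / \<eta> t)"
      using \<eta> by (auto intro!: mono_onI simp: monotone_on_def frac_le)
    show "0 \<le> 1 / \<eta> 1"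
      using \<eta>(1)[of 1] T by simp
  qed
  finally show ?thesis
    by simp
qed

lemma tuned_step_size_bound:
  fixes A c c\<eta> \<eta>0 :: real
  assumes "0 < c" "0 < c\<eta>" "0 < \<eta>0" and \<eta>0: "\<eta>0 = sqrt (c\<eta> * A) / c"
  shows "A / \<eta>0 + c\<^sup>2 * \<eta>0 / c\<eta> = 2 * c * sqrt (A / c\<eta>)"
proof -
  define s where "s = sqrt (A / c\<eta>)"
  have "0 < A"
    using assms by (simp add: zero_less_divide_iff zero_less_mult_iff)
  then have A: "A = c\<eta> * s\<^sup>2" "0 < s"
    using assms by (simp_all add: s_def)
  have "sqrt (c\<eta> * A) = sqrt (c\<eta>\<^sup>2 * (A / c\<eta>))"
    using assms by (simp add: power2_eq_square)
  also have "\<dots> = c\<eta> * s"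
    using assms by (simp only: real_sqrt_mult) (simp add: s_def)
  finally have "\<eta>0 = c\<eta> * s / c"
    using \<eta>0 by simp
  then show ?thesis
    unfolding A(1) using assms A(2) by simp (simp add: field_simps power2_eq_square)
qed

theorem theorem1:
  fixes K T :: nat
    and \<delta> c \<eta>0 c\<eta> :: real
    and z :: "nat \<Rightarrow> nat \<Rightarrow> real"
    and ft :: "nat \<Rightarrow> real"
    and what w :: "nat \<Rightarrow> nat \<Rightarrow> real"
  defines "g \<equiv> (\<lambda>t k. - ft t * z t k)"
    and "\<eta> \<equiv> (\<lambda>t. \<eta>0 / sqrt (1 + c\<eta> * real t))"
    and "V \<equiv> (\<Sum>t\<in>{2..T}. norm1_K K (\<lambda>k. w t k - w (t - 1) k))"
    and "L\<delta> \<equiv> 1 + ln (1 / \<delta>)"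
    and "R \<equiv> (\<Sum>t\<in>{1..T}. inner_K K (\<lambda>k. - ft t * z t k) (what t))
             - (\<Sum>t\<in>{1..T}. inner_K K (\<lambda>k. - ft t * z t k) (w t))"
  assumes K2: "K \<ge> 2" and T1: "T \<ge> 1"
    and \<delta>pos: "0 < \<delta>" and \<delta>le: "\<delta> \<le> 1 / real K"
    and cpos: "c > 0" and \<eta>0pos: "\<eta>0 > 0" and c\<eta>pos: "c\<eta> > 0"
    and z_simp: "\<And>t. t \<in> {1..T} \<Longrightarrow> z t \<in> simplex K"
    and f_bd: "\<And>t. t \<in> {1..T} \<Longrightarrow> \<bar>ft t\<bar> \<le> c"
    and what1: "what 1 = (\<lambda>k. 1 / real K)"
    and what_step: "\<And>t. t \<in> {1..T} \<Longrightarrow> what (Suc t) \<in> simplex K \<and>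
         (\<forall>v \<in> simplex K. \<eta> t * inner_K K (g t) (what (Suc t)) + KL K (what (Suc t)) (what t)
                            \<le> \<eta> t * inner_K K (g t) v + KL K v (what t))"
    and w_simp: "\<And>t. t \<in> {1..T} \<Longrightarrow> w t \<in> simplex K"
    and w_trunc: "\<And>t. t \<in> {1..T} \<Longrightarrow> w t \<in> trunc_simplex K \<delta>"
    and what_trunc: "\<And>t. t \<in> {1..Suc T} \<Longrightarrow> what t \<in> trunc_simplex K \<delta>"
  shows "R \<le> sqrt (1 + c\<eta> * real T) * ((ln (1 / \<delta>) + L\<delta> * V) / \<eta>0 + c\<^sup>2 * \<eta>0 / c\<eta>)
       \<and> (\<eta>0 = sqrt (c\<eta> * (ln (1 / \<delta>) + L\<delta> * V)) / c \<longrightarrow>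
            R \<le> 2 * c * sqrt ((ln (1 / \<delta>) + L\<delta> * V) / c\<eta>) * sqrt (1 + c\<eta> * real T))"
proof -
  have \<eta>_pos: "0 < \<eta> t" for t
    unfolding \<eta>_def using \<eta>0pos c\<eta>pos by (simp add: add_pos_nonneg)
  have "R = (\<Sum>t=1..T. inner_K K (g t) (what t) - inner_K K (g t) (w t))"
    unfolding R_def g_def by (simp add: sum_subtractf)
  also have "\<dots> \<le> (ln (1 / \<delta>) + L\<delta> * V) / \<eta> T + c\<^sup>2 / 2 * (\<Sum>t=1..T. \<eta> t)"
    unfolding L\<delta>_def V_def
  proof (rule entropic_mirror_descent_dynamic_regret[OF T1 \<delta>pos what_trunc w_trunc _ \<eta>_pos])
    show "antimono_on {1..T} \<eta>"
      unfolding \<eta>_def using \<eta>0pos c\<eta>pos by (intro antimono_sqrt_step_sizes) auto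
    show "\<bar>g t j - g t k\<bar> \<le> c" if "t \<in> {1..T}" "j < K" "k < K" for t j k
      using abs_diff_scaled_simplex_le[OF z_simp, of t "- ft t"] f_bd that by (simp add: g_def)
  qed (use what_step in auto)
  also have "\<dots> \<le> (ln (1 / \<delta>) + L\<delta> * V) / \<eta> T + c\<^sup>2 / 2 * (2 * \<eta>0 / c\<eta> * sqrt (1 + c\<eta> * real T))"
    using sum_sqrt_step_sizes_le[OF c\<eta>pos, of \<eta>0 T] \<eta>0pos unfolding \<eta>_def
    by (intro add_left_mono mult_left_mono) auto
  also have "\<dots> = sqrt (1 + c\<eta> * real T) * ((ln (1 / \<delta>) + L\<delta> * V) / \<eta>0 + c\<^sup>2 * \<eta>0 / c\<eta>)"
    using c\<eta>pos \<eta>0pos by (simp add: \<eta>_def field_simps add_pos_nonneg)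
  finally have main: "R \<le> sqrt (1 + c\<eta> * real T) * ((ln (1 / \<delta>) + L\<delta> * V) / \<eta>0 + c\<^sup>2 * \<eta>0 / c\<eta>)" .
  then show ?thesis
    using tuned_step_size_bound[OF cpos c\<eta>pos \<eta>0pos, of "ln (1 / \<delta>) + L\<delta> * V"]
    by (metis mult.commute)
qed

end
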